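(* Let $n\ge2$, fix a lattice $\mathbb{Z}+\mathbb{Z}\tau$ ($\operatorname{Im}\tau>0$) with Weierstrass function $\wp$, and fix $\lambda_1,\dots,\lambda_n\in\mathbb{C}$ with $\lambda_i-\lambda_j\notin\mathbb{Z}+\mathbb{Z}\tau$ for $i\ne j$. Let $k\ge2$ and let $i_1,\dots,i_k,m\in\{1,\dots,n\}$ be pairwise distinct. Then in the algebra $\mathcal{A}$ described in the context, \[ (-1)^{k+1}\sum_{a=1}^k [i_a\,m][i_{a+1}\,m]\cdots[i_k\,m]\cdot[i_1\,m][i_2\,m]\cdots[i_{a-1}\,m][i_a\,m] = \sum_{a=1}^k\wp(\lambda_{i_a}-\lambda_m)\,[i_a\,i_{a+1}][i_a\,i_{a+2}]\cdots[i_a\,i_k]\cdot[i_a\,i_1][i_a\,i_2]\cdots[i_a\,i_{a-1}]. \]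
   Context: Write $x_1,\dots,x_n$ for the coordinates on $\mathbb{C}^n$, $x_{ij}=x_i-x_j$, $\lambda_{ij}=\lambda_i-\lambda_j$, and let $\mathcal{M}$ be the field of meromorphic functions on $\mathbb{C}^n$; for $i\ne j$ let $s_{ij}$ act on $\mathcal{M}$ by $(s_{ij}f)(x)=f(x')$ where $x'$ is $x$ with coordinates $x_i,x_j$ interchanged. The algebra $\mathcal{A}$ is the $\mathbb{C}$-algebra generated by $\mathcal{M}$ and symbols $[ij]$, $1\le i\ne j\le n$, with $[ji]=-[ij]$, subject to: (i) $[ij]^2=\wp(\lambda_{ij})-\wp(x_{ij})$; (ii) $[ij][kl]=[kl][ij]$ if $\{i,j\}\cap\{k,l\}=\emptyset$; (iii) $[ij][jk]+[jk][ki]+[ki][ij]=0$ for distinct $i,j,k$; (iv) $[ij]f=(s_{ij}f)[ij]$ for $f\in\mathcal{M}$. *)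

theory Defs
  imports "HOL-Analysis.Analysis"
begin

definition lattice :: "complex \<Rightarrow> complex set" where
  "lattice \<tau> = {of_int a + of_int b * \<tau> | a b. True}"

text \<open>Weierstrass wp function of the lattice Z + Z tau (values at lattice points are junk).\<close>
definition wp :: "complex \<Rightarrow> complex \<Rightarrow> complex" where
  "wp \<tau> z = 1 / z ^ 2 + infsum (\<lambda>\<omega>. 1 / (z - \<omega>) ^ 2 - 1 / \<omega> ^ 2) (lattice \<tau> - {0})"

definition holo_on :: "(complex^'n::finite \<Rightarrow> complex) \<Rightarrow> (complex^'n) set \<Rightarrow> bool" where
  "holo_on f U \<longleftrightarrow> open U \<and> (\<forall>z\<in>U. \<exists>D. (f has_derivative D) (at z) \<and>
       (\<forall>(c::complex) v. D (c *s v) = c * D v))"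

text \<open>Meromorphic functions on C^n: locally a quotient g/h of holomorphic functions, h not
  identically zero on a connected neighbourhood (values on the zero set of h are irrelevant).\<close>
definition meromorphic :: "(complex^'n::finite \<Rightarrow> complex) \<Rightarrow> bool" where
  "meromorphic f \<longleftrightarrow> (\<forall>p. \<exists>U g h. p \<in> U \<and> connected U \<and> holo_on g U \<and> holo_on h U \<and>
       (\<exists>z\<in>U. h z \<noteq> 0) \<and> (\<forall>z\<in>U. h z \<noteq> 0 \<longrightarrow> f z = g z / h z))"

text \<open>Two representatives define the same element of the field of meromorphic functions
  iff they agree on an open dense set.\<close>
definition ae_eq :: "(complex^'n::finite \<Rightarrow> complex) \<Rightarrow> (complex^'n \<Rightarrow> complex) \<Rightarrow> bool" where
  "ae_eq f g \<longleftrightarrow> (\<exists>U. open U \<and> closure U = UNIV \<and> (\<forall>z\<in>U. f z = g z))"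

definition swapc :: "'n::finite \<Rightarrow> 'n \<Rightarrow> complex^'n \<Rightarrow> complex^'n" where
  "swapc i j x = (\<chi> l. if l = i then x $ j else if l = j then x $ i else x $ l)"

text \<open>A model of the defining relations of the algebra A: a ring with a ring homomorphism
  emb from the field of meromorphic functions (given on representatives, compatible with
  the identification of representatives) and elements g i j = [ij] satisfying (i)--(iv).
  An identity holds in A iff it holds in every such model (A is the universal one).\<close>
definition A_model :: "complex \<Rightarrow> ('n::finite \<Rightarrow> complex) \<Rightarrow>
     ((complex^'n \<Rightarrow> complex) \<Rightarrow> 'a::ring_1) \<Rightarrow> ('n \<Rightarrow> 'n \<Rightarrow> 'a) \<Rightarrow> bool" where
  "A_model \<tau> lam emb g \<longleftrightarrow>
     emb (\<lambda>_. 1) = 1 \<and>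
     (\<forall>f h. meromorphic f \<and> meromorphic h \<longrightarrow> emb (\<lambda>x. f x + h x) = emb f + emb h) \<and>
     (\<forall>f h. meromorphic f \<and> meromorphic h \<longrightarrow> emb (\<lambda>x. f x * h x) = emb f * emb h) \<and>
     (\<forall>f h. meromorphic f \<and> meromorphic h \<and> ae_eq f h \<longrightarrow> emb f = emb h) \<and>
     (\<forall>i j. i \<noteq> j \<longrightarrow> g j i = - g i j) \<and>
     (\<forall>i j. i \<noteq> j \<longrightarrow>
        g i j * g i j = emb (\<lambda>x. wp \<tau> (lam i - lam j) - wp \<tau> (x $ i - x $ j))) \<and>
     (\<forall>i j p q. i \<noteq> j \<and> p \<noteq> q \<and> {i, j} \<inter> {p, q} = {} \<longrightarrow> g i j * g p q = g p q * g i j) \<and>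
     (\<forall>i j p. i \<noteq> j \<and> j \<noteq> p \<and> i \<noteq> p \<longrightarrow>
        g i j * g j p + g j p * g p i + g p i * g i j = 0) \<and>
     (\<forall>i j f. i \<noteq> j \<and> meromorphic f \<longrightarrow> g i j * emb f = emb (\<lambda>x. f (swapc i j x)) * g i j)"

end

theory Submission
  imports Defs "HOL-Complex_Analysis.Cauchy_Integral_Formula"
begin

text \<open>Read both sides as functions of the word \<open>i\<^sub>1 \<dots> i\<^sub>k\<close>. Pushing \<open>[i\<^sub>1 m]\<close> through
  \<open>[i\<^sub>1 i\<^sub>2] \<cdots> [i\<^sub>1 i\<^sub>k]\<close> with the three-term relation (iii) expresses
  \<open>[i\<^sub>1 m]\<^sup>2 [i\<^sub>1 i\<^sub>2] \<cdots> [i\<^sub>1 i\<^sub>k]\<close> through the left-hand sides of the prefixes of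
  \<open>i\<^sub>2 \<dots> i\<^sub>k\<close>, and the right-hand side satisfies the same recursion with
  \<open>\<wp>(\<lambda>\<^sub>i\<^sub>1 - \<lambda>\<^sub>m)\<close> in place of \<open>[i\<^sub>1 m]\<^sup>2\<close>. So the difference of the two sides is governed
  by its value on one-letter words \<open>b\<close>, namely \<open>[b m]\<^sup>2 - \<wp>(\<lambda>\<^sub>b - \<lambda>\<^sub>m) = -\<wp>(x\<^sub>b - x\<^sub>m)\<close>
  by (i), and by (iv) the bracket \<open>[a b]\<close> intertwines these values for \<open>a\<close> and \<open>b\<close>; this makes
  the difference vanish on all words of length at least 2. The only analytic input is that
  \<open>x \<mapsto> \<wp>(x\<^sub>u - x\<^sub>v)\<close> is meromorphic, so that (iv) applies to it; this follows from the
  locally uniform convergence of the Weierstrass series.\<close>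

definition lattice_point :: "complex \<Rightarrow> int \<times> int \<Rightarrow> complex" where
  "lattice_point \<tau> p = of_int (fst p) + of_int (snd p) * \<tau>"

lemma lattice_eq_range_lattice_point: "lattice \<tau> = range (lattice_point \<tau>)"
proof (intro equalityI subsetI)
  fix w assume "w \<in> lattice \<tau>"
  then obtain a b where "w = of_int a + of_int b * \<tau>" unfolding lattice_def by auto
  then have "w = lattice_point \<tau> (a, b)" by (simp add: lattice_point_def)
  then show "w \<in> range (lattice_point \<tau>)" by blast
qed (auto simp: lattice_def lattice_point_def)

lemma lattice_point_coeff_bound:
  assumes "Im \<tau> > 0"
  obtains C where "C > 0" "\<And>p. real_of_int (\<bar>fst p\<bar> + \<bar>snd p\<bar>) \<le> C * norm (lattice_point \<tau> p)"
proof
  define C where "C = 1 + (1 + \<bar>Re \<tau>\<bar>) / Im \<tau>"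
  show "C > 0" using assms unfolding C_def by (simp add: add_pos_nonneg)
  fix p :: "int \<times> int"
  define a b z where "a = real_of_int (fst p)" and "b = real_of_int (snd p)"
    and "z = lattice_point \<tau> p"
  have Re: "Re z = a + b * Re \<tau>" and Im: "Im z = b * Im \<tau>"
    unfolding z_def a_def b_def lattice_point_def by simp_all
  have b: "\<bar>b\<bar> \<le> norm z / Im \<tau>"
    using abs_Im_le_cmod[of z] Im assms by (simp add: abs_mult field_simps)
  have "\<bar>a\<bar> \<le> \<bar>Re z\<bar> + \<bar>b\<bar> * \<bar>Re \<tau>\<bar>"
    using Re by (simp add: abs_mult[symmetric])
  also have "\<dots> \<le> norm z + norm z / Im \<tau> * \<bar>Re \<tau>\<bar>"
    using abs_Re_le_cmod[of z] b by (intro add_mono mult_right_mono) auto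
  finally have "\<bar>a\<bar> + \<bar>b\<bar> \<le> C * norm z"
    using b assms unfolding C_def by (simp add: field_simps)
  then show "real_of_int (\<bar>fst p\<bar> + \<bar>snd p\<bar>) \<le> C * norm (lattice_point \<tau> p)"
    unfolding a_def b_def z_def by simp
qed

lemma inj_lattice_point:
  assumes "Im \<tau> > 0"
  shows "inj (lattice_point \<tau>)"
proof (rule injI)
  fix p q assume eq: "lattice_point \<tau> p = lattice_point \<tau> q"
  obtain C where C: "\<And>p. real_of_int (\<bar>fst p\<bar> + \<bar>snd p\<bar>) \<le> C * norm (lattice_point \<tau> p)"
    using lattice_point_coeff_bound[OF assms] by blast
  have "lattice_point \<tau> (fst p - fst q, snd p - snd q) = 0"
    using eq by (simp add: lattice_point_def algebra_simps)
  then have "real_of_int (\<bar>fst p - fst q\<bar> + \<bar>snd p - snd q\<bar>) \<le> 0"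
    using C[of "(fst p - fst q, snd p - snd q)"] by simp
  then have "\<bar>fst p - fst q\<bar> + \<bar>snd p - snd q\<bar> \<le> 0"
    by (simp only: of_int_le_0_iff)
  then show "p = q" by (simp add: prod_eq_iff) arith
qed

lemma finite_lattice_cball:
  assumes "Im \<tau> > 0"
  shows "finite {w \<in> lattice \<tau>. norm w \<le> R}"
proof -
  obtain C where C: "C > 0" "\<And>p. real_of_int (\<bar>fst p\<bar> + \<bar>snd p\<bar>) \<le> C * norm (lattice_point \<tau> p)"
    using lattice_point_coeff_bound[OF assms] by blast
  define N where "N = \<lceil>C * R\<rceil>"
  have "{w \<in> lattice \<tau>. norm w \<le> R} \<subseteq> lattice_point \<tau> ` ({-N..N} \<times> {-N..N})"
  proof
    fix w assume "w \<in> {w \<in> lattice \<tau>. norm w \<le> R}"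
    then obtain p where p: "w = lattice_point \<tau> p" "norm (lattice_point \<tau> p) \<le> R"
      unfolding lattice_eq_range_lattice_point by auto
    have "real_of_int (\<bar>fst p\<bar> + \<bar>snd p\<bar>) \<le> C * R"
      using C(2)[of p] mult_left_mono[OF p(2), of C] C(1) by linarith
    then have "\<bar>fst p\<bar> + \<bar>snd p\<bar> \<le> N" unfolding N_def by linarith
    then have "p \<in> {-N..N} \<times> {-N..N}" by (cases p) auto
    then show "w \<in> lattice_point \<tau> ` ({-N..N} \<times> {-N..N})" using p by auto
  qed
  then show ?thesis by (rule finite_subset) auto
qed

text \<open>Products of these weights dominate \<open>1 / \<bar>\<omega>\<bar>\<^sup>3\<close> on the lattice, reducing its summability to
  that of \<open>\<Sum> n\<^sup>-\<^sup>3\<^sup>/\<^sup>2\<close>.\<close>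

definition lattice_weight :: "int \<Rightarrow> real" where
  "lattice_weight a = (1 + real_of_int \<bar>a\<bar>) powr (-3/2)"

lemma summable_on_lattice_weight: "lattice_weight summable_on UNIV"
proof -
  have nat: "summable (\<lambda>n. real (Suc n) powr (-3/2))"
    using summable_Suc_iff[of "\<lambda>n. real n powr (-3/2)"] by (simp add: summable_real_powr_iff)
  have "lattice_weight \<circ> f = (\<lambda>n. real (Suc n) powr (-3/2))" if "f = int \<or> f = (\<lambda>n. - int n)" for f
    using that by (auto simp: lattice_weight_def fun_eq_iff add.commute)
  then have "lattice_weight summable_on range f" if "f = int \<or> f = (\<lambda>n. - int n)" for f
    using that nat by (subst summable_on_reindex)
      (auto intro!: summable_nonneg_imp_summable_on simp: inj_on_def)
  moreover have "(UNIV :: int set) = range int \<union> range (\<lambda>n. - int n)"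
    by (auto intro: int_cases2)
  ultimately show ?thesis by (metis summable_on_union)
qed

lemma inverse_cube_le_lattice_weight:
  "1 / (1 + real_of_int (\<bar>a\<bar> + \<bar>b\<bar>)) ^ 3 \<le> lattice_weight a * lattice_weight b"
proof -
  define x y where "x = 1 + real_of_int \<bar>a\<bar>" and "y = 1 + real_of_int \<bar>b\<bar>"
  have xy: "x \<ge> 1" "y \<ge> 1" unfolding x_def y_def by auto
  have "x * y \<le> (x + y - 1) powr 2"
  proof -
    have "0 \<le> (x - 1) * (y - 1) + (x - 1)\<^sup>2 + (y - 1)\<^sup>2"
      using xy by simp
    then show ?thesis using xy by (simp add: power2_eq_square algebra_simps)
  qed
  then have "(x * y) powr (3/2) \<le> ((x + y - 1) powr 2) powr (3/2)"
    using xy by (intro powr_mono2) auto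
  also have "\<dots> = (x + y - 1) ^ 3"
    by (subst powr_powr) (use xy in \<open>simp add: powr_numeral\<close>)
  finally have "1 / (x + y - 1) ^ 3 \<le> 1 / (x * y) powr (3/2)"
    using xy by (intro divide_left_mono) auto
  also have "\<dots> = x powr (-3/2) * y powr (-3/2)"
    using xy by (simp add: powr_minus_divide powr_mult)
  finally show ?thesis unfolding lattice_weight_def x_def y_def by (simp add: add_ac)
qed

lemma lattice_weight_nonneg: "lattice_weight a \<ge> 0"
  unfolding lattice_weight_def by simp

lemma summable_on_lattice_weight_product:
  "(\<lambda>p. lattice_weight (fst p) * lattice_weight (snd p)) summable_on UNIV"
proof -
  have "(\<lambda>p. lattice_weight (fst p) * lattice_weight (snd p)) summable_on UNIV \<times> UNIV"
  proof (rule summable_on_SigmaI)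
    show "((\<lambda>b. lattice_weight (fst (a, b)) * lattice_weight (snd (a, b))) has_sum
            lattice_weight a * infsum lattice_weight UNIV) UNIV" for a
      using has_sum_cmult_right[OF has_sum_infsum[OF summable_on_lattice_weight]] by simp
    show "(\<lambda>a. lattice_weight a * infsum lattice_weight UNIV) summable_on UNIV"
      by (intro summable_on_cmult_left summable_on_lattice_weight)
  qed (simp add: lattice_weight_nonneg)
  then show ?thesis by simp
qed

lemma summable_on_lattice_inverse_cube:
  assumes "Im \<tau> > 0"
  shows "(\<lambda>w. 1 / norm w ^ 3) summable_on (lattice \<tau> - {0})"
proof -
  obtain C where C: "C > 0" "\<And>p. real_of_int (\<bar>fst p\<bar> + \<bar>snd p\<bar>) \<le> C * norm (lattice_point \<tau> p)"
    using lattice_point_coeff_bound[OF assms] by blast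
  have bound: "1 / norm (lattice_point \<tau> p) ^ 3
      \<le> (8 * C ^ 3) * (lattice_weight (fst p) * lattice_weight (snd p))" if "p \<noteq> (0, 0)" for p
  proof -
    define K where "K = real_of_int (\<bar>fst p\<bar> + \<bar>snd p\<bar>)"
    have K: "K \<ge> 1" unfolding K_def using that by (cases p) auto
    have K_le: "K \<le> C * norm (lattice_point \<tau> p)" using C(2) unfolding K_def .
    have "1 / norm (lattice_point \<tau> p) ^ 3 = C ^ 3 / (C * norm (lattice_point \<tau> p)) ^ 3"
      using C(1) by (simp add: power_mult_distrib)
    also have "\<dots> \<le> C ^ 3 / K ^ 3"
      using K K_le C(1) by (intro divide_left_mono power_mono mult_pos_pos) auto
    also have "\<dots> \<le> C ^ 3 / ((1 + K) / 2) ^ 3"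
      using K C(1) by (intro divide_left_mono power_mono mult_pos_pos) auto
    also have "\<dots> = (8 * C ^ 3) * (1 / (1 + K) ^ 3)"
      by (simp add: power_divide)
    also have "\<dots> \<le> (8 * C ^ 3) * (lattice_weight (fst p) * lattice_weight (snd p))"
      unfolding K_def using inverse_cube_le_lattice_weight C(1) by (intro mult_left_mono) auto
    finally show ?thesis .
  qed
  have "(\<lambda>p. (8 * C ^ 3) * (lattice_weight (fst p) * lattice_weight (snd p)))
      summable_on (UNIV - {(0, 0)})"
    by (intro summable_on_cmult_right summable_on_subset_banach[OF summable_on_lattice_weight_product])
      simp
  then have "((\<lambda>w. 1 / norm w ^ 3) \<circ> lattice_point \<tau>) summable_on (UNIV - {(0, 0)})"
    by (rule summable_on_comparison_test) (use bound in auto)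
  moreover have "lattice \<tau> - {0} = lattice_point \<tau> ` (UNIV - {(0, 0)})"
    unfolding lattice_eq_range_lattice_point image_set_diff[OF inj_lattice_point[OF assms]]
    by (simp add: lattice_point_def)
  ultimately show ?thesis
    using inj_lattice_point[OF assms] by (simp add: summable_on_reindex inj_on_subset)
qed

definition wp_term :: "complex \<Rightarrow> complex \<Rightarrow> complex" where
  "wp_term w z = 1 / (z - w) ^ 2 - 1 / w ^ 2"

lemma norm_wp_term_le:
  assumes "R > 0" "norm z \<le> R" "norm w > 2 * R"
  shows "norm (wp_term w z) \<le> 10 * R * (1 / norm w ^ 3)"
proof -
  define n where "n = norm w"
  have n: "n > 2 * R" using assms(3) unfolding n_def .
  have "z \<noteq> w" "w \<noteq> 0" using assms n_def by auto
  then have "wp_term w z = (w ^ 2 - (z - w) ^ 2) / ((z - w) ^ 2 * w ^ 2)"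
    unfolding wp_term_def by (simp add: diff_frac_eq)
  also have "w ^ 2 - (z - w) ^ 2 = z * (2 * w - z)"
    by (simp add: power2_eq_square algebra_simps)
  finally have eq: "wp_term w z = z * (2 * w - z) / ((z - w) ^ 2 * w ^ 2)" .
  have "norm (2 * w - z) \<le> 5/2 * n"
    using norm_triangle_ineq4[of "2 * w" z] assms(2) n n_def by (simp add: norm_mult)
  then have num: "norm (z * (2 * w - z)) \<le> R * (5/2 * n)"
    unfolding norm_mult using assms(1,2) by (intro mult_mono) auto
  have "norm (z - w) \<ge> n / 2"
    using norm_triangle_ineq2[of w z] assms(2) n n_def by (simp add: norm_minus_commute)
  then have den: "(n / 2) ^ 2 * n ^ 2 \<le> norm ((z - w) ^ 2 * w ^ 2)"
    unfolding norm_mult norm_power n_def[symmetric] using n assms(1)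
    by (intro mult_right_mono power_mono) auto
  have "norm (wp_term w z) \<le> R * (5/2 * n) / ((n / 2) ^ 2 * n ^ 2)"
    unfolding eq norm_divide using num den n assms(1) by (intro frac_le) auto
  also have "\<dots> = 10 * R * (1 / n ^ 3)"
    using n assms(1) by (simp add: field_simps power2_eq_square power3_eq_cube)
  finally show ?thesis unfolding n_def .
qed

lemma wp_tail:
  assumes "Im \<tau> > 0" "R > 0"
  defines "T \<equiv> lattice \<tau> - cball 0 (2 * R)"
  shows summable_on_wp_tail: "z \<in> cball 0 R \<Longrightarrow> (\<lambda>w. wp_term w z) summable_on T"
    and holomorphic_on_wp_tail: "(\<lambda>z. infsum (\<lambda>w. wp_term w z) T) holomorphic_on ball 0 R"
proof -
  have "T \<subseteq> lattice \<tau> - {0}" unfolding T_def using assms(2) by auto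
  then have majorant: "(\<lambda>w. 10 * R * (1 / norm w ^ 3)) summable_on T"
    by (intro summable_on_cmult_right summable_on_subset_banach[OF summable_on_lattice_inverse_cube[OF assms(1)]])
  have bound: "norm (wp_term w z) \<le> 10 * R * (1 / norm w ^ 3)" if "w \<in> T" "z \<in> cball 0 R" for w z
    using that assms(2) by (intro norm_wp_term_le) (auto simp: T_def)
  show "(\<lambda>w. wp_term w z) summable_on T" if "z \<in> cball 0 R" for z
  proof (rule abs_summable_summable)
    show "(\<lambda>w. norm (wp_term w z)) summable_on T"
    proof (rule summable_on_comparison_test[OF majorant])
      show "norm (wp_term w z) \<le> 10 * R * (1 / norm w ^ 3)" if "w \<in> T" for w
        using bound that \<open>z \<in> cball 0 R\<close> by blast
    qed simp
  qed
  have limit: "uniform_limit (cball 0 R) (\<lambda>X z. \<Sum>w\<in>X. wp_term w z)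
      (\<lambda>z. infsum (\<lambda>w. wp_term w z) T) (finite_subsets_at_top T)"
    by (rule Weierstrass_m_test_general[OF bound majorant])
  have partial_sums: "\<forall>\<^sub>F X in finite_subsets_at_top T.
      continuous_on (cball 0 R) (\<lambda>z. \<Sum>w\<in>X. wp_term w z) \<and>
      (\<lambda>z. \<Sum>w\<in>X. wp_term w z) holomorphic_on ball 0 R"
  proof (rule eventually_finite_subsets_at_top_weakI)
    fix X assume X: "finite X" "X \<subseteq> T"
    have "z - w \<noteq> 0" if "w \<in> X" "z \<in> cball 0 R" for w z
      using that X assms(2) by (auto simp: T_def dist_norm)
    then have "(\<lambda>z. \<Sum>w\<in>X. wp_term w z) holomorphic_on cball 0 R"
      unfolding wp_term_def by (intro holomorphic_intros) auto
    then show "continuous_on (cball 0 R) (\<lambda>z. \<Sum>w\<in>X. wp_term w z) \<and>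
        (\<lambda>z. \<Sum>w\<in>X. wp_term w z) holomorphic_on ball 0 R"
      using holomorphic_on_imp_continuous_on holomorphic_on_subset ball_subset_cball by blast
  qed
  show "(\<lambda>z. infsum (\<lambda>w. wp_term w z) T) holomorphic_on ball 0 R"
    by (rule holomorphic_uniform_limit[OF partial_sums limit]) simp_all
qed

lemma sum_inverse_square_times_prod:
  fixes z :: complex
  assumes "finite S" "\<And>w. w \<in> S \<Longrightarrow> z \<noteq> w"
  shows "(\<Sum>w\<in>S. 1 / (z - w) ^ 2) * (\<Prod>w\<in>S. (z - w) ^ 2) = (\<Sum>w\<in>S. \<Prod>w'\<in>S - {w}. (z - w') ^ 2)"
  unfolding sum_distrib_right
proof (rule sum.cong[OF refl])
  fix w assume "w \<in> S"
  then show "1 / (z - w) ^ 2 * (\<Prod>w\<in>S. (z - w) ^ 2) = (\<Prod>w'\<in>S - {w}. (z - w') ^ 2)"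
    using prod.remove[OF assms(1), of w "\<lambda>w. (z - w) ^ 2"] assms(2) by simp
qed

lemma wp_split:
  assumes "Im \<tau> > 0" "R > 0" "z \<in> ball 0 R"
  defines "S \<equiv> lattice \<tau> \<inter> cball 0 (2 * R)"
  shows "wp \<tau> z = (\<Sum>w\<in>S. 1 / (z - w) ^ 2) - (\<Sum>w\<in>S - {0}. 1 / w ^ 2)
    + infsum (\<lambda>w. wp_term w z) (lattice \<tau> - cball 0 (2 * R))"
proof -
  have S: "finite S" "0 \<in> S"
    using finite_lattice_cball[OF assms(1), of "2 * R"] assms(2)
    by (auto simp: S_def lattice_def Int_def cball_def dist_norm intro: exI[of _ 0])
  have "lattice \<tau> - {0} = (S - {0}) \<union> (lattice \<tau> - cball 0 (2 * R))"
    "(S - {0}) \<inter> (lattice \<tau> - cball 0 (2 * R)) = {}"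
    using assms(2) by (auto simp: S_def)
  then have "infsum (\<lambda>w. wp_term w z) (lattice \<tau> - {0}) =
      (\<Sum>w\<in>S - {0}. wp_term w z) + infsum (\<lambda>w. wp_term w z) (lattice \<tau> - cball 0 (2 * R))"
    using S assms(3) summable_on_wp_tail[OF assms(1,2)] by (simp add: infsum_Un_disjoint)
  moreover have "(\<Sum>w\<in>S. 1 / (z - w) ^ 2) = 1 / z ^ 2 + (\<Sum>w\<in>S - {0}. 1 / (z - w) ^ 2)"
    using sum.remove[OF S, of "\<lambda>w. 1 / (z - w) ^ 2"] by simp
  ultimately show ?thesis
    unfolding wp_def wp_term_def[abs_def] by (simp add: sum_subtractf)
qed

lemma wp_locally_quotient:
  assumes "Im \<tau> > 0" "R > 0"
  obtains P G where "P holomorphic_on ball 0 R" "G holomorphic_on ball 0 R"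
    "\<exists>z\<in>ball 0 R. P z \<noteq> 0" "\<And>z. z \<in> ball 0 R \<Longrightarrow> P z \<noteq> 0 \<Longrightarrow> wp \<tau> z = G z / P z"
proof -
  define S where "S = lattice \<tau> \<inter> cball 0 (2 * R)"
  define h where "h z = infsum (\<lambda>w. wp_term w z) (lattice \<tau> - cball 0 (2 * R))" for z
  define P where "P z = (\<Prod>w\<in>S. (z - w) ^ 2)" for z
  define G where "G z = (\<Sum>w\<in>S. \<Prod>w'\<in>S - {w}. (z - w') ^ 2) + (h z - (\<Sum>w\<in>S - {0}. 1 / w ^ 2)) * P z"
    for z
  have "finite S" unfolding S_def using finite_lattice_cball[OF assms(1), of "2 * R"]
    by (simp add: Int_def cball_def dist_norm)
  have "P holomorphic_on ball 0 R" "G holomorphic_on ball 0 R"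
    unfolding P_def G_def h_def using holomorphic_on_wp_tail[OF assms] by (auto intro!: holomorphic_intros)
  moreover have "\<exists>z\<in>ball 0 R. P z \<noteq> 0"
  proof -
    have "infinite (complex_of_real ` {0<..<R})"
      using assms(2) by (subst finite_image_iff) (auto simp: inj_on_def)
    then have "\<not> complex_of_real ` {0<..<R} \<subseteq> S"
      using \<open>finite S\<close> finite_subset by blast
    then obtain t where "t \<in> {0<..<R}" "complex_of_real t \<notin> S" by blast
    then show ?thesis by (intro bexI[of _ "complex_of_real t"]) (auto simp: P_def \<open>finite S\<close>)
  qed
  moreover have "wp \<tau> z = G z / P z" if "z \<in> ball 0 R" "P z \<noteq> 0" for z
  proof -
    have "z \<noteq> w" if "w \<in> S" for w
      using \<open>P z \<noteq> 0\<close> that \<open>finite S\<close> by (auto simp: P_def)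
    then have "(\<Sum>w\<in>S. 1 / (z - w) ^ 2) * P z = (\<Sum>w\<in>S. \<Prod>w'\<in>S - {w}. (z - w') ^ 2)"
      unfolding P_def by (rule sum_inverse_square_times_prod[OF \<open>finite S\<close>])
    then have "wp \<tau> z * P z = G z"
      unfolding wp_split[OF assms that(1)] G_def h_def S_def by (simp add: algebra_simps)
    then show ?thesis using that(2) by (simp add: field_simps)
  qed
  ultimately show ?thesis using that by blast
qed

lemma holo_on_compose_coord_diff:
  fixes F :: "complex \<Rightarrow> complex" and u v :: "'n::finite"
  assumes "F holomorphic_on B" "open B"
  shows "holo_on (\<lambda>x::complex^'n. F (x $ u - x $ v)) {x. x $ u - x $ v \<in> B}"
  unfolding holo_on_def
proof (intro conjI ballI)
  have "continuous_on UNIV (\<lambda>x::complex^'n. x $ u - x $ v)" by (intro continuous_intros)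
  then show "open {x::complex^'n. x $ u - x $ v \<in> B}"
    using open_vimage[OF assms(2)] by (simp add: vimage_def)
  fix z :: "complex^'n" assume "z \<in> {x. x $ u - x $ v \<in> B}"
  then have "(F has_derivative (*) (deriv F (z $ u - z $ v))) (at (z $ u - z $ v))"
    by (intro has_field_derivative_imp_has_derivative holomorphic_derivI[OF assms]) auto
  moreover have "((\<lambda>x::complex^'n. x $ u - x $ v) has_derivative (\<lambda>x. x $ u - x $ v)) (at z)"
    by (intro bounded_linear_imp_has_derivative bounded_linear_sub bounded_linear_vec_nth)
  ultimately have "((\<lambda>x. F (x $ u - x $ v)) has_derivative
      (\<lambda>x. deriv F (z $ u - z $ v) * (x $ u - x $ v))) (at z)"
    using has_derivative_compose by blast
  then show "\<exists>D. ((\<lambda>x. F (x $ u - x $ v)) has_derivative D) (at z) \<and>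
      (\<forall>(c::complex) w. D (c *s w) = c * D w)"
    by (intro exI[of _ "\<lambda>x. deriv F (z $ u - z $ v) * (x $ u - x $ v)"]) (simp add: algebra_simps)
qed

lemma meromorphic_const: "meromorphic (\<lambda>_::complex^'n::finite. c)"
proof -
  have "holo_on (\<lambda>_::complex^'n. d) UNIV" for d :: complex
    unfolding holo_on_def by (auto intro!: exI[of _ "\<lambda>_. 0"])
  then show ?thesis
    unfolding meromorphic_def
    by (intro allI exI[where x=UNIV] exI[where x="\<lambda>_. c"] exI[where x="\<lambda>_. 1"])
      (simp add: connected_UNIV)
qed

lemma meromorphic_minus_wp_coord_diff:
  fixes u v :: "'n::finite"
  assumes "Im \<tau> > 0" "u \<noteq> v"
  shows "meromorphic (\<lambda>x::complex^'n. - wp \<tau> (x $ u - x $ v))"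
  unfolding meromorphic_def
proof
  fix p :: "complex^'n"
  define R where "R = norm (p $ u - p $ v) + 1"
  have "R > 0" unfolding R_def by (simp add: add_nonneg_pos)
  then obtain P G where P: "P holomorphic_on ball 0 R" "\<exists>z\<in>ball 0 R. P z \<noteq> 0"
    and G: "G holomorphic_on ball 0 R"
    and wp: "\<And>z. z \<in> ball 0 R \<Longrightarrow> P z \<noteq> 0 \<Longrightarrow> wp \<tau> z = G z / P z"
    using wp_locally_quotient[OF assms(1)] by metis
  define U where "U = {x::complex^'n. x $ u - x $ v \<in> ball 0 R}"
  have "p \<in> U" unfolding U_def R_def by simp
  have "linear (\<lambda>x::complex^'n. x $ u - x $ v)"
    by (intro bounded_linear.linear bounded_linear_sub bounded_linear_vec_nth)
  then have "convex U"
    unfolding U_def using convex_linear_vimage[OF _ convex_ball[of 0 R]] by (simp add: vimage_def)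
  then have "connected U" by (rule convex_connected)
  moreover have "holo_on (\<lambda>x::complex^'n. - G (x $ u - x $ v)) U"
    "holo_on (\<lambda>x::complex^'n. P (x $ u - x $ v)) U"
    unfolding U_def using G P(1) by (intro holo_on_compose_coord_diff holomorphic_intros; simp)+
  moreover have "\<exists>x\<in>U. P (x $ u - x $ v) \<noteq> 0"
  proof -
    obtain z where z: "z \<in> ball 0 R" "P z \<noteq> 0" using P(2) by blast
    define x :: "complex^'n" where "x = (\<chi> l. if l = u then z else 0)"
    have "x $ u - x $ v = z" unfolding x_def using assms(2) by simp
    then show ?thesis using z unfolding U_def by blast
  qed
  moreover have "\<forall>x\<in>U. P (x $ u - x $ v) \<noteq> 0 \<longrightarrow>
      - wp \<tau> (x $ u - x $ v) = - G (x $ u - x $ v) / P (x $ u - x $ v)"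
    using wp unfolding U_def by simp
  ultimately show "\<exists>U g h. p \<in> U \<and> connected U \<and> holo_on g U \<and> holo_on h U \<and>
      (\<exists>z\<in>U. h z \<noteq> 0) \<and> (\<forall>z\<in>U. h z \<noteq> 0 \<longrightarrow> - wp \<tau> (z $ u - z $ v) = g z / h z)"
    using \<open>p \<in> U\<close> by blast
qed

lemma mult_minus_one_power_left_commute: "x * ((-1) ^ n * y) = (-1) ^ n * (x * y :: 'a::ring_1)"
  by (cases "even n") simp_all

lemma minus_one_power_cancel_left: "(-1) ^ n * ((-1) ^ n * x) = (x :: 'a::ring_1)"
  by (simp flip: mult.assoc power_add)

lemma sum_triangle_swap:
  fixes r :: nat and G :: "nat \<Rightarrow> nat \<Rightarrow> 'a::comm_monoid_add"
  shows "(\<Sum>l<r. \<Sum>j\<le>l. G j (l - j)) = (\<Sum>j<r. \<Sum>t<r - j. G j t)"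
proof -
  have "(\<Sum>l<r. \<Sum>j\<le>l. G j (l - j)) = (\<Sum>(j, t)\<in>{(j, t). j + t < r}. G j t)"
    by (rule sum.triangle_reindex[symmetric])
  also have "{(j, t). j + t < r} = Sigma {..<r} (\<lambda>j. {..<r - j})" by auto
  finally show ?thesis by (simp add: sum.Sigma)
qed

locale bracket_relations =
  fixes g :: "'n \<Rightarrow> 'n \<Rightarrow> 'a::ring_1"
  assumes antisym: "i \<noteq> j \<Longrightarrow> g j i = - g i j"
    and commute_disjoint: "i \<noteq> j \<Longrightarrow> p \<noteq> q \<Longrightarrow> i \<noteq> p \<Longrightarrow> i \<noteq> q \<Longrightarrow> j \<noteq> p \<Longrightarrow> j \<noteq> q \<Longrightarrow>
      g i j * g p q = g p q * g i j"
    and three_term: "x \<noteq> y \<Longrightarrow> y \<noteq> z \<Longrightarrow> x \<noteq> z \<Longrightarrow> g y z * g x z = g x y * g y z - g x z * g x y"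
begin

definition out_prod :: "'n \<Rightarrow> 'n list \<Rightarrow> 'a" where
  "out_prod c xs = prod_list (map (g c) xs)"

definition in_prod :: "'n \<Rightarrow> 'n list \<Rightarrow> 'a" where
  "in_prod c xs = prod_list (map (\<lambda>b. g b c) xs)"

lemma out_prod_simps [simp]:
  "out_prod c [] = 1" "out_prod c (x # xs) = g c x * out_prod c xs"
  "out_prod c (xs @ ys) = out_prod c xs * out_prod c ys"
  by (simp_all add: out_prod_def)

lemma in_prod_simps [simp]:
  "in_prod c [] = 1" "in_prod c (x # xs) = g x c * in_prod c xs"
  "in_prod c (xs @ ys) = in_prod c xs * in_prod c ys"
  by (simp_all add: in_prod_def)

lemma bracket_commute_out_prod:
  assumes "distinct [b, m, a]" "set xs \<inter> {a, b, m} = {}"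
  shows "g b m * out_prod a xs = out_prod a xs * g b m"
  using assms(2)
proof (induction xs)
  case (Cons x xs)
  then have "g b m * g a x = g a x * g b m" using assms(1) by (intro commute_disjoint) auto
  then show ?case using Cons by (simp flip: mult.assoc) (simp add: mult.assoc)
qed simp

lemma in_prod_eq_out_prod:
  "c \<notin> set xs \<Longrightarrow> in_prod c xs = (-1) ^ length xs * out_prod c xs"
proof (induction xs)
  case (Cons x xs)
  then show ?case by (simp add: antisym[of c x] mult_minus_one_power_left_commute)
qed simp

lemma bracket_times_out_prod:
  assumes "distinct (a # m # bs)"
  shows "g a m * out_prod a bs =
    (\<Sum>j<length bs. (-1) ^ j * out_prod a (drop j bs) * in_prod m (take (Suc j) bs))
      + (-1) ^ length bs * in_prod m bs * g a m"
  using assms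
proof (induction bs)
  case (Cons b cs)
  have b: "a \<noteq> b" "b \<noteq> m" "a \<noteq> m" using Cons.prems by auto
  have commute: "g b m * out_prod a (drop j cs) = out_prod a (drop j cs) * g b m" for j
    using Cons.prems by (intro bracket_commute_out_prod) (auto dest: in_set_dropD)
  have "distinct (a # m # cs)" using Cons.prems by simp
  have three: "g a m * g a b = g a b * g b m - g b m * g a m"
    using three_term[OF b(1) b(2) b(3)] by (simp add: algebra_simps)
  have "g a m * out_prod a (b # cs) = (g a m * g a b) * out_prod a cs"
    by (simp add: mult.assoc)
  also have "\<dots> = g a b * (g b m * out_prod a cs) - g b m * (g a m * out_prod a cs)"
    unfolding three by (simp add: left_diff_distrib mult.assoc)
  also have "\<dots> = g a b * out_prod a cs * g b m - g b m * (g a m * out_prod a cs)"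
    using commute[of 0] by (simp add: mult.assoc)
  also have "\<dots> = g a b * out_prod a cs * g b m -
      ((\<Sum>j<length cs. (-1) ^ j * (g b m * out_prod a (drop j cs)) * in_prod m (take (Suc j) cs))
        + (-1) ^ length cs * (g b m * in_prod m cs) * g a m)"
    unfolding Cons.IH[OF \<open>distinct (a # m # cs)\<close>]
    by (simp add: mult.assoc sum_distrib_left algebra_simps mult_minus_one_power_left_commute)
  also have "\<dots> = (\<Sum>j<length (b # cs). (-1) ^ j * out_prod a (drop j (b # cs)) * in_prod m (take (Suc j) (b # cs)))
      + (-1) ^ length (b # cs) * in_prod m (b # cs) * g a m"
    unfolding commute
    by (simp del: sum.lessThan_Suc add: sum.lessThan_Suc_shift mult.assoc sum_negf algebra_simps)
  finally show ?case .
qed simp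

lemma bracket_times_lhs_summand:
  assumes "distinct (a # m # bs)" "j < length bs"
  shows "g a m * ((-1) ^ j * out_prod a (drop j bs) * in_prod m (take (Suc j) bs)) =
    (\<Sum>t<length bs - j. (-1) ^ (j + t) * out_prod a (drop (j + t) bs) *
      (in_prod m (take (Suc t) (drop j bs)) * in_prod m (take (Suc j) bs)))
    + (-1) ^ length bs * (in_prod m (drop j bs) * g a m * in_prod m (take (Suc j) bs))"
proof -
  have "distinct (a # m # drop j bs)"
    using assms(1) by (auto dest: in_set_dropD simp: distinct_drop)
  then have push: "g a m * out_prod a (drop j bs) =
      (\<Sum>t<length bs - j. (-1) ^ t * out_prod a (drop (j + t) bs) * in_prod m (take (Suc t) (drop j bs)))
        + (-1) ^ (length bs - j) * in_prod m (drop j bs) * g a m"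
    using bracket_times_out_prod by (simp add: add.commute)
  have "g a m * ((-1) ^ j * out_prod a (drop j bs) * in_prod m (take (Suc j) bs)) =
      (-1) ^ j * (g a m * out_prod a (drop j bs)) * in_prod m (take (Suc j) bs)"
    by (simp add: mult.assoc mult_minus_one_power_left_commute)
  also have "\<dots> = (\<Sum>t<length bs - j. (-1) ^ (j + t) * out_prod a (drop (j + t) bs) *
      (in_prod m (take (Suc t) (drop j bs)) * in_prod m (take (Suc j) bs)))
    + (-1) ^ (j + (length bs - j)) * (in_prod m (drop j bs) * g a m * in_prod m (take (Suc j) bs))"
    unfolding push
    by (simp add: distrib_left distrib_right sum_distrib_left sum_distrib_right flip: mult.assoc power_add)
  finally show ?thesis using assms(2) by simp
qed

lemma out_prod_snoc:
  assumes "distinct (a # c # us)"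
  shows "out_prod c (us @ [a]) =
    - (\<Sum>t<Suc (length us). out_prod a (drop t (c # us)) * out_prod c (take t us))"
proof -
  have c: "c \<notin> set us" using assms by auto
  have summand: "(-1) ^ j * out_prod a (drop j us) * in_prod c (take (Suc j) us)
      = - (out_prod a (drop j us) * out_prod c (take (Suc j) us))" if "j < length us" for j
  proof -
    have "c \<notin> set (take (Suc j) us)" using c by (meson in_set_takeD)
    then have "in_prod c (take (Suc j) us) = (-1) ^ Suc j * out_prod c (take (Suc j) us)"
      using that by (simp add: in_prod_eq_out_prod)
    moreover have "out_prod a (drop j us) * ((-1) ^ Suc j * out_prod c (take (Suc j) us))
        = (-1) ^ Suc j * (out_prod a (drop j us) * out_prod c (take (Suc j) us))"
      by (rule mult_minus_one_power_left_commute)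
    ultimately show ?thesis
      by (simp add: mult.assoc minus_one_power_cancel_left)
  qed
  have "out_prod c us * g a c = g a c * out_prod a us
      + (\<Sum>j<length us. out_prod a (drop j us) * out_prod c (take (Suc j) us))"
  proof -
    have "(-1) ^ length us * in_prod c us * g a c = out_prod c us * g a c"
      using c by (simp add: in_prod_eq_out_prod minus_one_power_cancel_left)
    then show ?thesis
      using bracket_times_out_prod[of a c us] assms summand by (simp add: sum_negf)
  qed
  also have "\<dots> = (\<Sum>t<Suc (length us). out_prod a (drop t (c # us)) * out_prod c (take t us))"
    by (simp del: sum.lessThan_Suc add: sum.lessThan_Suc_shift)
  finally show ?thesis using antisym[of a c] assms by simp
qed

end

text \<open>In the model \<open>E a = \<wp>(\<lambda>\<^sub>a - \<lambda>\<^sub>m)\<close>, so \<open>[a m]\<^sup>2 - E a\<close> is the function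
  \<open>-\<wp>(x\<^sub>a - x\<^sub>m)\<close>, which \<open>[a b]\<close> turns into \<open>-\<wp>(x\<^sub>b - x\<^sub>m)\<close> by (iv).\<close>

locale elliptic_bracket_relations = bracket_relations g for g :: "'n \<Rightarrow> 'n \<Rightarrow> 'a::ring_1" +
  fixes E :: "'n \<Rightarrow> 'a" and m :: 'n
  assumes E_commute: "u \<noteq> v \<Longrightarrow> E x * g u v = g u v * E x"
    and intertwine: "a \<noteq> b \<Longrightarrow> a \<noteq> m \<Longrightarrow> b \<noteq> m \<Longrightarrow>
      (g a m * g a m - E a) * g a b = g a b * (g b m * g b m - E b)"
begin

text \<open>For \<open>s = [i\<^sub>1, \<dots>, i\<^sub>k]\<close> these are the two sums of the theorem.\<close>

definition lhs_sum :: "'n list \<Rightarrow> 'a" where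
  "lhs_sum s = (\<Sum>c<length s. in_prod m (drop c s) * in_prod m (take (Suc c) s))"

definition rhs_sum :: "'n list \<Rightarrow> 'a" where
  "rhs_sum s = (\<Sum>c<length s. E (s ! c) * out_prod (s ! c) (drop (Suc c) s) * out_prod (s ! c) (take c s))"

definition defect :: "'n list \<Rightarrow> 'a" where
  "defect s = (-1) ^ (length s + 1) * lhs_sum s - rhs_sum s"

lemma E_commute_out_prod: "c \<notin> set xs \<Longrightarrow> E x * out_prod c xs = out_prod c xs * E x"
proof (induction xs)
  case (Cons y xs)
  then have "E x * g c y = g c y * E x" by (intro E_commute) auto
  then show ?case using Cons by (simp flip: mult.assoc) (simp add: mult.assoc)
qed simp

lemma lhs_sum_cons:
  "lhs_sum (a # bs) = g a m * in_prod m bs * g a m +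
    (\<Sum>j<length bs. in_prod m (drop j bs) * g a m * in_prod m (take (Suc j) bs))"
  unfolding lhs_sum_def by (simp del: sum.lessThan_Suc add: sum.lessThan_Suc_shift mult.assoc)

lemma lhs_sum_take:
  assumes "l < length bs"
  shows "lhs_sum (take (Suc l) bs) =
    (\<Sum>j\<le>l. in_prod m (take (Suc (l - j)) (drop j bs)) * in_prod m (take (Suc j) bs))"
proof -
  have length: "length (take (Suc l) bs) = Suc l" using assms by simp
  show ?thesis
    unfolding lhs_sum_def length lessThan_Suc_atMost
    by (intro sum.cong refl) (simp add: drop_take min_def Suc_diff_le)
qed

lemma rhs_sum_take:
  assumes "l < length bs"
  shows "rhs_sum (take (Suc l) bs) = (\<Sum>j\<le>l. E (bs ! j) *
    out_prod (bs ! j) (take (l - j) (drop (Suc j) bs)) * out_prod (bs ! j) (take j bs))"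
proof -
  have length: "length (take (Suc l) bs) = Suc l" using assms by simp
  show ?thesis
    unfolding rhs_sum_def length lessThan_Suc_atMost
    by (intro sum.cong refl) (simp add: drop_take min_def)
qed

lemma square_times_out_prod:
  assumes "distinct (a # m # bs)"
  shows "g a m * g a m * out_prod a bs = (-1) ^ length bs * lhs_sum (a # bs) +
    (\<Sum>l<length bs. (-1) ^ l * out_prod a (drop l bs) * lhs_sum (take (Suc l) bs))"
proof -
  define r where "r = length bs"
  define A where "A = g a m"
  define H where "H j t = (-1) ^ (j + t) * out_prod a (drop (j + t) bs) *
    (in_prod m (take (Suc t) (drop j bs)) * in_prod m (take (Suc j) bs))" for j t
  have "A * A * out_prod a bs = (\<Sum>j<r. A * ((-1) ^ j * out_prod a (drop j bs) * in_prod m (take (Suc j) bs)))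
      + (-1) ^ r * (A * in_prod m bs * A)"
    using bracket_times_out_prod[OF assms] unfolding A_def r_def
    by (simp add: mult.assoc distrib_left sum_distrib_left mult_minus_one_power_left_commute)
  also have "\<dots> = (\<Sum>j<r. \<Sum>t<r - j. H j t) +
      (-1) ^ r * ((\<Sum>j<r. in_prod m (drop j bs) * A * in_prod m (take (Suc j) bs)) + A * in_prod m bs * A)"
    unfolding A_def r_def H_def using bracket_times_lhs_summand[OF assms]
    by (simp add: sum.distrib sum_distrib_left distrib_left)
  also have "(\<Sum>j<r. in_prod m (drop j bs) * A * in_prod m (take (Suc j) bs)) + A * in_prod m bs * A
      = lhs_sum (a # bs)"
    unfolding lhs_sum_cons A_def r_def by simp
  also have "(\<Sum>j<r. \<Sum>t<r - j. H j t) = (\<Sum>l<r. \<Sum>j\<le>l. H j (l - j))"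
    by (rule sum_triangle_swap[symmetric])
  also have "\<dots> = (\<Sum>l<r. (-1) ^ l * out_prod a (drop l bs) * lhs_sum (take (Suc l) bs))"
    unfolding r_def H_def
    by (intro sum.cong refl) (simp add: lhs_sum_take sum_distrib_left mult.assoc)
  finally show ?thesis unfolding A_def r_def by (simp add: add.commute)
qed

lemma rhs_summand_cons:
  assumes "distinct (a # bs)" "j < length bs"
  shows "out_prod (bs ! j) (drop (Suc j) bs) * out_prod (bs ! j) (a # take j bs) =
    - (\<Sum>t<length bs - j. out_prod a (drop (j + t) bs) * out_prod (bs ! j) (take t (drop (Suc j) bs)))
      * out_prod (bs ! j) (take j bs)"
proof -
  define c us where "c = bs ! j" and "us = drop (Suc j) bs"
  have c_us: "c # us = drop j bs"
    unfolding c_def us_def using assms(2) by (simp add: Cons_nth_drop_Suc)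
  have "distinct (a # c # us)"
    unfolding c_us using assms(1) by (auto dest: in_set_dropD simp: distinct_drop)
  moreover have "Suc (length us) = length bs - j" unfolding us_def using assms(2) by simp
  ultimately have "out_prod c (us @ [a]) =
      - (\<Sum>t<length bs - j. out_prod a (drop (j + t) bs) * out_prod c (take t us))"
    using out_prod_snoc[of a c us] by (simp add: c_us add.commute)
  moreover have "out_prod c us * out_prod c (a # take j bs) = out_prod c (us @ [a]) * out_prod c (take j bs)"
    by (simp add: mult.assoc)
  ultimately show ?thesis unfolding c_def[symmetric] us_def[symmetric] by simp
qed

lemma rhs_sum_cons:
  assumes "distinct (a # bs)"
  shows "rhs_sum (a # bs) = E a * out_prod a bs -
    (\<Sum>l<length bs. out_prod a (drop l bs) * rhs_sum (take (Suc l) bs))"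
proof -
  define r where "r = length bs"
  define G where "G j t = E (bs ! j) * (out_prod a (drop (j + t) bs) *
    out_prod (bs ! j) (take t (drop (Suc j) bs)) * out_prod (bs ! j) (take j bs))" for j t
  have "rhs_sum (a # bs) = E a * out_prod a bs +
      (\<Sum>j<r. E (bs ! j) * out_prod (bs ! j) (drop (Suc j) bs) * out_prod (bs ! j) (a # take j bs))"
    unfolding rhs_sum_def r_def by (simp del: sum.lessThan_Suc add: sum.lessThan_Suc_shift)
  also have "\<dots> = E a * out_prod a bs - (\<Sum>j<r. \<Sum>t<r - j. G j t)"
    unfolding r_def G_def using rhs_summand_cons[OF assms]
    by (simp add: mult.assoc sum_distrib_left sum_distrib_right sum_negf)
  also have "(\<Sum>j<r. \<Sum>t<r - j. G j t) = (\<Sum>l<r. \<Sum>j\<le>l. G j (l - j))"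
    by (rule sum_triangle_swap[symmetric])
  also have "\<dots> = (\<Sum>l<r. out_prod a (drop l bs) * rhs_sum (take (Suc l) bs))"
  proof (intro sum.cong refl)
    fix l assume "l \<in> {..<r}"
    then have "l < length bs" unfolding r_def by simp
    moreover have "a \<notin> set (drop l bs)" using assms by (auto dest: in_set_dropD)
    ultimately show "(\<Sum>j\<le>l. G j (l - j)) = out_prod a (drop l bs) * rhs_sum (take (Suc l) bs)"
      unfolding G_def rhs_sum_take[OF \<open>l < length bs\<close>] sum_distrib_left
      by (intro sum.cong refl) (simp add: E_commute_out_prod[OF \<open>a \<notin> set (drop l bs)\<close>, symmetric] flip: mult.assoc)
  qed
  finally show ?thesis unfolding r_def .
qed

lemma defect_cons:
  assumes "distinct (a # m # bs)"
  shows "defect (a # bs) = (g a m * g a m - E a) * out_prod a bs -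
    (\<Sum>l<length bs. out_prod a (drop l bs) * defect (take (Suc l) bs))"
proof -
  define SL where "SL = (\<Sum>l<length bs. (-1) ^ l * out_prod a (drop l bs) * lhs_sum (take (Suc l) bs))"
  define SR where "SR = (\<Sum>l<length bs. out_prod a (drop l bs) * rhs_sum (take (Suc l) bs))"
  have "(\<Sum>l<length bs. out_prod a (drop l bs) * defect (take (Suc l) bs)) =
      (\<Sum>l<length bs. (-1) ^ l * out_prod a (drop l bs) * lhs_sum (take (Suc l) bs) -
        out_prod a (drop l bs) * rhs_sum (take (Suc l) bs))"
    by (intro sum.cong refl)
      (simp add: defect_def right_diff_distrib mult_minus_one_power_left_commute mult.assoc)
  also have "\<dots> = SL - SR"
    unfolding SL_def SR_def by (rule sum_subtractf)
  finally have defects: "(\<Sum>l<length bs. out_prod a (drop l bs) * defect (take (Suc l) bs)) = SL - SR" .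
  have lhs: "(-1) ^ (length (a # bs) + 1) * lhs_sum (a # bs) = g a m * g a m * out_prod a bs - SL"
    using square_times_out_prod[OF assms] unfolding SL_def by simp
  have rhs: "rhs_sum (a # bs) = E a * out_prod a bs - SR"
    using rhs_sum_cons[of a bs] assms unfolding SR_def by simp
  have "defect (a # bs) = (g a m * g a m * out_prod a bs - SL) - (E a * out_prod a bs - SR)"
    by (simp only: defect_def lhs rhs)
  then show ?thesis unfolding defects by (simp add: algebra_simps)
qed

lemma defect_singleton: "defect [b] = g b m * g b m - E b"
  by (simp add: defect_def lhs_sum_def rhs_sum_def)

lemma defect_eq_0:
  assumes "2 \<le> length s" "distinct s" "m \<notin> set s"
  shows "defect s = 0"
  using assms
proof (induction "length s" arbitrary: s rule: less_induct)
  case less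
  obtain a b cs where s: "s = a # b # cs"
    using less.prems(1) by (cases s; cases "tl s") auto
  have distinct: "distinct (a # m # b # cs)" using less.prems s by auto
  have "defect (b # take (Suc i) cs) = 0" if "i < length cs" for i
    using that less.prems s by (intro less.hyps) (auto dest: in_set_takeD)
  then have "(\<Sum>l<length (b # cs). out_prod a (drop l (b # cs)) * defect (take (Suc l) (b # cs)))
      = out_prod a (b # cs) * (g b m * g b m - E b)"
    by (simp del: sum.lessThan_Suc add: sum.lessThan_Suc_shift defect_singleton)
  moreover have "(g a m * g a m - E a) * g a b = g a b * (g b m * g b m - E b)"
    using distinct by (intro intertwine) auto
  moreover have "(g b m * g b m - E b) * out_prod a cs = out_prod a cs * (g b m * g b m - E b)"
  proof -
    have "g b m * out_prod a cs = out_prod a cs * g b m"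
      using distinct by (intro bracket_commute_out_prod) auto
    moreover have "E b * out_prod a cs = out_prod a cs * E b"
      using distinct by (intro E_commute_out_prod) auto
    ultimately show ?thesis by (simp add: algebra_simps) (metis mult.assoc)
  qed
  ultimately show ?case
    unfolding s defect_cons[OF distinct] by (simp flip: mult.assoc) (simp add: mult.assoc)
qed

lemma lhs_sum_eq_rhs_sum:
  "2 \<le> length s \<Longrightarrow> distinct s \<Longrightarrow> m \<notin> set s \<Longrightarrow> (-1) ^ (length s + 1) * lhs_sum s = rhs_sum s"
  using defect_eq_0 unfolding defect_def by simp

lemma lhs_sum_map_upt:
  "lhs_sum (map i [1..<k + 1]) = (\<Sum>a=1..k. prod_list (map (\<lambda>b. g (i b) m) [a..<k + 1]) *
    prod_list (map (\<lambda>b. g (i b) m) [1..<a + 1]))"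
  unfolding lhs_sum_def in_prod_def
  by (simp add: sum.atLeast1_atMost_eq drop_map take_map take_upt o_def del: upt_Suc)

lemma rhs_sum_map_upt:
  "rhs_sum (map i [1..<k + 1]) = (\<Sum>a=1..k. E (i a) * prod_list (map (\<lambda>b. g (i a) (i b)) [a + 1..<k + 1]) *
    prod_list (map (\<lambda>b. g (i a) (i b)) [1..<a]))"
  unfolding rhs_sum_def out_prod_def
  by (simp add: sum.atLeast1_atMost_eq drop_map take_map take_upt o_def del: upt_Suc)

end

lemma A_modelD:
  assumes "A_model \<tau> lam emb g"
  shows A_model_add: "meromorphic f \<Longrightarrow> meromorphic h \<Longrightarrow> emb (\<lambda>x. f x + h x) = emb f + emb h"
    and A_model_antisym: "i \<noteq> j \<Longrightarrow> g j i = - g i j"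
    and A_model_square:
      "i \<noteq> j \<Longrightarrow> g i j * g i j = emb (\<lambda>x. wp \<tau> (lam i - lam j) - wp \<tau> (x $ i - x $ j))"
    and A_model_commute:
      "i \<noteq> j \<Longrightarrow> p \<noteq> q \<Longrightarrow> {i, j} \<inter> {p, q} = {} \<Longrightarrow> g i j * g p q = g p q * g i j"
    and A_model_cyclic:
      "i \<noteq> j \<Longrightarrow> j \<noteq> p \<Longrightarrow> i \<noteq> p \<Longrightarrow> g i j * g j p + g j p * g p i + g p i * g i j = 0"
    and A_model_swap:
      "i \<noteq> j \<Longrightarrow> meromorphic f \<Longrightarrow> g i j * emb f = emb (\<lambda>x. f (swapc i j x)) * g i j"
  using assms unfolding A_model_def by (elim conjE; meson)+

lemma A_model_bracket_relations:
  assumes "A_model \<tau> lam emb g"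
  shows "bracket_relations g"
proof
  show "g j i = - g i j" if "i \<noteq> j" for i j
    using A_model_antisym[OF assms that] .
  show "g i j * g p q = g p q * g i j"
    if "i \<noteq> j" "p \<noteq> q" "i \<noteq> p" "i \<noteq> q" "j \<noteq> p" "j \<noteq> q" for i j p q
    using A_model_commute[OF assms] that by blast
  show "g y z * g x z = g x y * g y z - g x z * g x y" if "x \<noteq> y" "y \<noteq> z" "x \<noteq> z" for x y z
    using A_model_cyclic[OF assms that] A_model_antisym[OF assms, of x z] that
    by (simp add: algebra_simps)
qed

lemma A_model_elliptic_bracket_relations:
  fixes g :: "'n::finite \<Rightarrow> 'n \<Rightarrow> 'a::ring_1" and m :: 'n
  assumes "Im \<tau> > 0" "A_model \<tau> lam emb g"
  shows "elliptic_bracket_relations g (\<lambda>x. emb (\<lambda>_. wp \<tau> (lam x - lam m))) m"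
proof -
  define E where "E x = emb (\<lambda>_. wp \<tau> (lam x - lam m))" for x
  define W :: "'n \<Rightarrow> complex^'n \<Rightarrow> complex" where "W u = (\<lambda>x. - wp \<tau> (x $ u - x $ m))" for u
  have W: "meromorphic (W u)" if "u \<noteq> m" for u
    unfolding W_def using meromorphic_minus_wp_coord_diff[OF assms(1) that] .
  have "E x * g u v = g u v * E x" if "u \<noteq> v" for x u v
    using A_model_swap[OF assms(2) that meromorphic_const] unfolding E_def by simp
  moreover have "(g a m * g a m - E a) * g a b = g a b * (g b m * g b m - E b)"
    if "a \<noteq> b" "a \<noteq> m" "b \<noteq> m" for a b
  proof -
    have square: "g u m * g u m - E u = emb (W u)" if "u \<noteq> m" for u
    proof -
      have "g u m * g u m = emb (\<lambda>x. (\<lambda>_. wp \<tau> (lam u - lam m)) x + W u x)"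
        using A_model_square[OF assms(2) that] unfolding W_def by simp
      also have "\<dots> = E u + emb (W u)"
        unfolding E_def using A_model_add[OF assms(2) meromorphic_const W[OF that]] .
      finally show ?thesis by simp
    qed
    have "(\<lambda>x. W b (swapc a b x)) = W a"
      unfolding W_def swapc_def using that by (simp add: fun_eq_iff)
    then show ?thesis
      unfolding square[OF that(2)] square[OF that(3)]
      using A_model_swap[OF assms(2) that(1) W[OF that(3)]] by simp
  qed
  ultimately show ?thesis
    unfolding E_def using A_model_bracket_relations[OF assms(2)]
    by (simp add: elliptic_bracket_relations_def elliptic_bracket_relations_axioms_def)
qed

theorem lemma3p2:
  fixes \<tau> :: complex and lam :: "'n::finite \<Rightarrow> complex"
    and emb :: "(complex^'n \<Rightarrow> complex) \<Rightarrow> 'a::ring_1"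
    and g :: "'n \<Rightarrow> 'n \<Rightarrow> 'a"
    and k :: nat and i :: "nat \<Rightarrow> 'n" and m :: 'n
  assumes "CARD('n) \<ge> 2" and "Im \<tau> > 0"
    and "\<forall>p q. p \<noteq> q \<longrightarrow> lam p - lam q \<notin> lattice \<tau>"
    and "A_model \<tau> lam emb g"
    and "k \<ge> 2" and "inj_on i {1..k}" and "m \<notin> i ` {1..k}"
  shows "(-1) ^ (k + 1) *
      (\<Sum>a=1..k. prod_list (map (\<lambda>b. g (i b) m) [a..<k+1]) *
                  prod_list (map (\<lambda>b. g (i b) m) [1..<a+1]))
    = (\<Sum>a=1..k. emb (\<lambda>_. wp \<tau> (lam (i a) - lam m)) *
                  prod_list (map (\<lambda>b. g (i a) (i b)) [a+1..<k+1]) *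
                  prod_list (map (\<lambda>b. g (i a) (i b)) [1..<a]))"
proof -
  text \<open>The identity is formal in the relations.\<close>
  interpret elliptic_bracket_relations g "\<lambda>x. emb (\<lambda>_. wp \<tau> (lam x - lam m))" m
    using A_model_elliptic_bracket_relations[OF assms(2,4)] .
  define s where "s = map i [1..<k + 1]"
  have "set [1..<k + 1] = {1..k}" by auto
  then have "distinct s" "m \<notin> set s" "length s = k"
    unfolding s_def using assms(6,7) by (simp_all add: distinct_map del: upt_Suc)
  then have "(-1) ^ (k + 1) * lhs_sum s = rhs_sum s"
    using lhs_sum_eq_rhs_sum[of s] assms(5) by simp
  then show ?thesis unfolding s_def lhs_sum_map_upt rhs_sum_map_upt .
qed

end
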